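(* For every integer $k\ge3$, $a_{k-1}(K_{1,2k})<a_k(K_{1,2k})$, where $K_{1,2k}$ is the star graph with $2k+1$ vertices.
   Context: All graphs are finite simple graphs; $G|_I$ is the induced subgraph on $I\subseteq V(G)$. The signed $a$-number: $sa(\emptyset)=1$; if $G$ has connected components $G_1,\dots,G_\ell$, $sa(G)=\prod_k sa(G_k)$; if $G$ is connected and nonempty, $sa(G)=-\sum_{I\subsetneq V(G)}sa(G|_I)$ when $|V(G)|$ is even and $0$ when odd. $a(G)=|sa(G)|$ and $a_i(G)=\sum_{I\subseteq V(G),|I|=2i}a(G|_I)$. The star graph $K_{1,m}$ has one center vertex adjacent to each of $m$ leaves and no other edges. *)

theory Defs
  imports Main
begin

text \<open>The induced subgraph on I \<subseteq> V is
  (I, Es) with only the edges having both endpoints in I being relevant;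
  all notions below only look at edges inside the current vertex set.\<close>

definition adjrel :: "'a set set \<Rightarrow> 'a set \<Rightarrow> ('a \<times> 'a) set" where
  "adjrel Es V = {(a, b). a \<in> V \<and> b \<in> V \<and> {a, b} \<in> Es}"

definition reach :: "'a set set \<Rightarrow> 'a set \<Rightarrow> 'a \<Rightarrow> 'a \<Rightarrow> bool" where
  "reach Es V x y \<longleftrightarrow> (x, y) \<in> (adjrel Es V)\<^sup>*"

definition graph_connected :: "'a set set \<Rightarrow> 'a set \<Rightarrow> bool" where
  "graph_connected Es V \<longleftrightarrow> V \<noteq> {} \<and> (\<forall>x\<in>V. \<forall>y\<in>V. reach Es V x y)"

definition components :: "'a set set \<Rightarrow> 'a set \<Rightarrow> 'a set set" where
  "components Es V = (\<lambda>x. {y \<in> V. reach Es V x y}) ` V"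

lemma adjrel_sym: "sym (adjrel Es V)"
  unfolding adjrel_def sym_def by (auto simp: insert_commute)

lemma reach_sym: "reach Es V x y \<Longrightarrow> reach Es V y x"
  unfolding reach_def using sym_rtrancl[OF adjrel_sym, of Es V] unfolding sym_def by blast

lemma component_psubset:
  assumes "V \<noteq> {}" "\<not> graph_connected Es V" "C \<in> components Es V"
  shows "C \<subset> V"
proof -
  obtain x where x: "x \<in> V" "C = {y \<in> V. reach Es V x y}"
    using assms(3) unfolding components_def by auto
  have "C \<noteq> V"
  proof
    assume "C = V"
    then have "\<forall>y\<in>V. reach Es V x y" using x by auto
    then have "\<forall>y\<in>V. \<forall>z\<in>V. reach Es V y z"
      using reach_sym unfolding reach_def by (meson rtrancl_trans)
    then show False using assms(1,2) unfolding graph_connected_def by auto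
  qed
  then show ?thesis using x by auto
qed

function sa :: "'a set set \<Rightarrow> 'a set \<Rightarrow> int" where
  "sa Es V =
    (if infinite V then 0
     else if V = {} then 1
     else if graph_connected Es V then
       (if even (card V) then - (\<Sum>I \<in> {I. I \<subset> V}. sa Es I) else 0)
     else (\<Prod>C \<in> components Es V. sa Es C))"
  by pat_completeness auto
termination
proof (relation "measure (\<lambda>(Es, V). card V)")
  show "wf (measure (\<lambda>(Es, V). card V))" by simp
next
  fix Es :: "'a set set" and V I
  assume "\<not> infinite V" "I \<in> {I. I \<subset> V}"
  then show "((Es, I), Es, V) \<in> measure (\<lambda>(Es, V). card V)"
    by (auto intro: psubset_card_mono)
next
  fix Es :: "'a set set" and V C
  assume "\<not> infinite V" "V \<noteq> {}" "\<not> graph_connected Es V" "C \<in> components Es V"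
  then show "((Es, C), Es, V) \<in> measure (\<lambda>(Es, V). card V)"
    using component_psubset[of V Es C] by (simp add: psubset_card_mono)
qed

declare sa.simps[simp del]

definition a_num :: "'a set set \<Rightarrow> 'a set \<Rightarrow> nat" where
  "a_num Es V = nat \<bar>sa Es V\<bar>"

definition a_i :: "nat \<Rightarrow> 'a set set \<Rightarrow> 'a set \<Rightarrow> nat" where
  "a_i i Es V = (\<Sum>I \<in> {I. I \<subseteq> V \<and> card I = 2 * i}. a_num Es I)"

definition star_edges :: "'a \<Rightarrow> 'a set \<Rightarrow> 'a set set" where
  "star_edges c L = {{c, l} | l. l \<in> L}"

end

theory Submission
  imports Defs "HOL-Computational_Algebra.Formal_Power_Series"
begin

(* In a star, an induced subgraph avoiding the centre is edgeless, so it has sa = 0 unless it is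
   empty, while one containing the centre and j leaves is again a star K_{1,j}, whose signed
   a-number s_j depends only on j. Hence a_i(K_{1,n}) = C(n, 2i-1) |s_{2i-1}|. The recursion for
   s_j says that its exponential generating function F satisfies F (e^x + e^-x) = e^-x - e^x,
   i.e. F = -tanh x, so F' = F^2 - 1 and |s_j| is the tangent number T_j, which satisfies
   T_(n+1) = sum_j C(n,j) T_j T_(n-j). From this recurrence 3 T_(m+2) >= (m+2)(m+1) T_m follows
   by induction, which is more than enough to beat C(2k,3) / C(2k,1) = (2k-1)(2k-2)/6. *)

unbundle fps_syntax

lemma sum_subsets_insert:
  assumes "finite S" "a \<notin> S"
  shows "(\<Sum>T | T \<subseteq> insert a S \<and> P T. f T) =
    (\<Sum>T | T \<subseteq> S \<and> P T. f T) + (\<Sum>T | T \<subseteq> S \<and> P (insert a T). f (insert a T))"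
proof -
  have "inj_on (insert a) {T. T \<subseteq> S \<and> P (insert a T)}"
    using assms(2) by (auto simp: inj_on_def)
  moreover have "{insert a T |T. T \<subseteq> S \<and> P (insert a T)} = insert a ` {T. T \<subseteq> S \<and> P (insert a T)}"
    by blast
  ultimately show ?thesis
    unfolding subset_insert_lemma using assms
    by (subst sum.union_disjoint) (auto simp: sum.reindex)
qed

lemma sum_psubsets_card:
  assumes "finite M"
  shows "(\<Sum>T | T \<subset> M. g (card T)) = (\<Sum>j<card M. of_nat (card M choose j) * g j)"
proof -
  have "(\<Sum>T | T \<subset> M. g (card T)) = (\<Sum>j<card M. \<Sum>T \<in> {T \<in> {T. T \<subset> M}. card T = j}. g (card T))"
  proof (rule sum.group[symmetric])
    show "finite {T. T \<subset> M}"
      using assms by (auto intro: finite_subset[of _ "Pow M"])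
  qed (use assms psubset_card_mono in auto)
  also have "\<dots> = (\<Sum>j<card M. of_nat (card M choose j) * g j)"
  proof (rule sum.cong[OF refl])
    fix j assume "j \<in> {..<card M}"
    then have "{T \<in> {T. T \<subset> M}. card T = j} = {T. T \<subseteq> M \<and> card T = j}"
      by (auto simp: psubset_eq)
    then show "(\<Sum>T \<in> {T \<in> {T. T \<subset> M}. card T = j}. g (card T)) = of_nat (card M choose j) * g j"
      using n_subsets[OF assms, of j] by simp
  qed
  finally show ?thesis .
qed

lemma choose_add_two_mult: "(n choose (i + 2)) * ((i + 2) * (i + 1)) = n * (n - 1) * ((n - 2) choose i)"
proof (cases "n \<ge> 2")
  case True
  then obtain p where "n = Suc (Suc p)"
    using add_2_eq_Suc le_Suc_ex by blast
  then show ?thesis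
    using Suc_times_binomial_eq[of "Suc p" "Suc i"] Suc_times_binomial_eq[of p i]
    by (simp add: algebra_simps)
next
  case False
  then show ?thesis
    by auto
qed

lemma sa_empty: "sa Es {} = 1"
  by (subst sa.simps) simp

lemma sa_singleton: "sa Es {x} = 0"
proof -
  have "graph_connected Es {x}"
    unfolding graph_connected_def reach_def by auto
  then show ?thesis
    by (subst sa.simps) simp
qed

lemma sa_edgeless:
  assumes "finite V" "V \<noteq> {}" "adjrel Es V = {}"
  shows "sa Es V = 0"
proof -
  have reach_iff: "reach Es V x y \<longleftrightarrow> x = y" for x y
    using assms(3) by (simp add: reach_def)
  show ?thesis
  proof (cases "graph_connected Es V")
    case True
    then obtain x where "V = {x}"
      using reach_iff unfolding graph_connected_def by blast
    then show ?thesis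
      by (simp add: sa_singleton)
  next
    case False
    have "components Es V = (\<lambda>x. {x}) ` V"
      unfolding components_def reach_iff using Collect_conv_if by (auto intro!: image_cong)
    moreover have "sa Es V = (\<Prod>C \<in> components Es V. sa Es C)"
      using assms False by (subst sa.simps) simp
    ultimately show ?thesis
      using assms by (simp add: prod.reindex sa_singleton card_gt_0_iff)
  qed
qed

lemma adjrel_star_edges_leaves:
  assumes "c \<notin> L" "I \<subseteq> L"
  shows "adjrel (star_edges c L) I = {}"
  using assms unfolding adjrel_def star_edges_def by (auto simp: doubleton_eq_iff)

lemma graph_connected_star_edges:
  assumes "M \<subseteq> L"
  shows "graph_connected (star_edges c L) (insert c M)"
proof -
  let ?E = "star_edges c L" and ?V = "insert c M"
  have "(c, x) \<in> adjrel ?E ?V \<and> (x, c) \<in> adjrel ?E ?V" if "x \<in> M" for x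
    using that assms unfolding adjrel_def star_edges_def by (auto simp: insert_commute)
  then have "reach ?E ?V x c \<and> reach ?E ?V c x" if "x \<in> ?V" for x
    using that unfolding reach_def by auto
  then show ?thesis
    unfolding graph_connected_def reach_def by (meson insert_not_empty rtrancl_trans)
qed

(* s_m = sa(K_{1,m}): among the proper induced subgraphs of K_{1,m}, the empty one contributes 1,
   the other leaf-only ones 0, and those containing the centre and j leaves s_j each. *)
function star_sa :: "nat \<Rightarrow> int" where
  "star_sa m = (if even m then 0 else - (1 + (\<Sum>j<m. int (m choose j) * star_sa j)))"
  by pat_completeness auto
termination by (relation "measure id") auto

declare star_sa.simps[simp del]

lemma star_sa_even: "even m \<Longrightarrow> star_sa m = 0"
  by (simp add: star_sa.simps)

lemma sa_star_edges:
  assumes "c \<notin> L" "finite M" "M \<subseteq> L"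
  shows "sa (star_edges c L) (insert c M) = star_sa (card M)"
  using assms(2,3)
proof (induction M rule: finite_psubset_induct)
  case (psubset M)
  let ?E = "star_edges c L"
  have c: "c \<notin> M"
    using assms(1) psubset.prems by blast
  have sa_eq: "sa ?E (insert c M) =
      (if odd (card M) then - (\<Sum>I | I \<subset> insert c M. sa ?E I) else 0)"
    using graph_connected_star_edges[OF psubset.prems] psubset.hyps c by (subst sa.simps) simp
  have leaves: "(\<Sum>I | I \<subseteq> M. sa ?E I) = 1"
  proof -
    have "(\<Sum>I | I \<subseteq> M. sa ?E I) = (\<Sum>I \<in> {{}}. sa ?E I)"
    proof (rule sum.mono_neutral_right)
      show "\<forall>I \<in> {I. I \<subseteq> M} - {{}}. sa ?E I = 0"
        using assms(1) psubset
        by (auto intro!: sa_edgeless adjrel_star_edges_leaves intro: finite_subset)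
    qed (use psubset.hyps in auto)
    then show ?thesis
      by (simp add: sa_empty)
  qed
  have with_centre: "(\<Sum>I | I \<subset> M. sa ?E (insert c I)) = (\<Sum>j<card M. int (card M choose j) * star_sa j)"
  proof -
    have "(\<Sum>I | I \<subset> M. sa ?E (insert c I)) = (\<Sum>I | I \<subset> M. star_sa (card I))"
      using psubset by (intro sum.cong) auto
    then show ?thesis
      using sum_psubsets_card[OF psubset.hyps(1)] by simp
  qed
  have "{I. I \<subset> insert c M} = {I. I \<subseteq> insert c M \<and> I \<noteq> insert c M}"
    by blast
  moreover have "{I. I \<subseteq> M \<and> I \<noteq> insert c M} = {I. I \<subseteq> M}"
    using c by blast
  moreover have "{I. I \<subseteq> M \<and> insert c I \<noteq> insert c M} = {I. I \<subset> M}"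
    using c by (auto simp: psubset_eq)
  ultimately have "(\<Sum>I | I \<subset> insert c M. sa ?E I) =
      (\<Sum>I | I \<subseteq> M. sa ?E I) + (\<Sum>I | I \<subset> M. sa ?E (insert c I))"
    using sum_subsets_insert[OF psubset.hyps(1) c, where P = "\<lambda>I. I \<noteq> insert c M" and f = "sa ?E"] by simp
  then show ?case
    using sa_eq leaves with_centre star_sa.simps[of "card M"] by simp
qed

lemma a_i_star_edges:
  assumes "c \<notin> L" "finite L" "i \<ge> 1"
  shows "a_i i (star_edges c L) (insert c L) = (card L choose (2 * i - 1)) * nat \<bar>star_sa (2 * i - 1)\<bar>"
proof -
  let ?E = "star_edges c L"
  have "sa ?E I = 0" if "I \<subseteq> L" "card I = 2 * i" for I
    using that assms by (intro sa_edgeless adjrel_star_edges_leaves) (auto intro: finite_subset)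
  then have leaves: "(\<Sum>I | I \<subseteq> L \<and> card I = 2 * i. a_num ?E I) = 0"
    by (simp add: a_num_def)
  have "card (insert c I) = Suc (card I)" if "I \<subseteq> L" for I
    using that assms by (meson card_insert_disjoint finite_subset subsetD)
  then have "card (insert c I) = 2 * i \<longleftrightarrow> card I = 2 * i - 1" if "I \<subseteq> L" for I
    using that assms(3) by auto
  then have "{I. I \<subseteq> L \<and> card (insert c I) = 2 * i} = {I. I \<subseteq> L \<and> card I = 2 * i - 1}"
    by blast
  moreover have "a_num ?E (insert c I) = nat \<bar>star_sa (2 * i - 1)\<bar>" if "I \<subseteq> L" "card I = 2 * i - 1" for I
    using that assms sa_star_edges[of c L I] finite_subset[OF that(1) assms(2)] by (simp add: a_num_def)
  ultimately show ?thesis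
    unfolding a_i_def sum_subsets_insert[OF assms(2,1)] leaves
    using n_subsets[OF assms(2)] by simp
qed

lemma star_sa_binomial_sum:
  assumes "odd n"
  shows "(\<Sum>j\<le>n. int (n choose j) * star_sa j) = -1"
  using assms star_sa.simps[of n] by (simp add: lessThan_Suc_atMost[symmetric])

lemma star_sa_mult_neg_one_power:
  assumes "j \<le> n"
  shows "star_sa j * (-1) ^ (n - j) = - star_sa j * (-1) ^ n"
proof (cases "even j")
  case False
  have "(-1 :: int) ^ n = (-1) ^ (n - j) * (-1) ^ j"
    using assms by (simp flip: power_add)
  with False show ?thesis
    by simp
qed (simp add: star_sa_even)

definition star_sa_egf :: "real fps" where
  "star_sa_egf = Abs_fps (\<lambda>n. of_int (star_sa n) / fact n)"

lemma star_sa_egf_mult_exp_sum: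
  "star_sa_egf * (fps_exp 1 + fps_exp (-1)) = fps_exp (-1) - fps_exp 1"
proof (rule fps_ext)
  fix n
  have term_eq: "of_int (star_sa j) / fact j * ((1 + (-1) ^ (n - j)) / fact (n - j)) =
      (1 - (-1) ^ n) * of_int (int (n choose j) * star_sa j) / (fact n :: real)" if "j \<le> n" for j
  proof -
    have "real_of_int (star_sa j * (-1) ^ (n - j)) = of_int (- star_sa j * (-1) ^ n)"
      using star_sa_mult_neg_one_power[OF that] by simp
    then have "of_int (star_sa j) * (1 + (-1) ^ (n - j)) = (1 - (-1) ^ n) * (of_int (star_sa j) :: real)"
      by (simp add: algebra_simps)
    then have "of_int (star_sa j) / fact j * ((1 + (-1) ^ (n - j)) / fact (n - j)) =
        (1 - (-1) ^ n) * of_int (star_sa j) / (fact j * fact (n - j) :: real)"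
      by simp
    then show ?thesis
      using that by (simp add: binomial_fact)
  qed
  have "(star_sa_egf * (fps_exp 1 + fps_exp (-1))) $ n =
      (\<Sum>j\<le>n. of_int (star_sa j) / fact j * ((1 + (-1) ^ (n - j)) / fact (n - j)))"
    by (simp add: fps_mult_nth star_sa_egf_def add_divide_distrib atLeast0AtMost)
  also have "\<dots> = (\<Sum>j\<le>n. (1 - (-1) ^ n) * of_int (int (n choose j) * star_sa j) / fact n)"
    by (rule sum.cong[OF refl term_eq]) simp
  also have "\<dots> = (1 - (-1) ^ n) * of_int (\<Sum>j\<le>n. int (n choose j) * star_sa j) / fact n"
    by (simp add: sum_divide_distrib sum_distrib_left)
  also have "\<dots> = (fps_exp (-1) - fps_exp 1) $ n"
    by (cases "even n") (simp_all add: star_sa_binomial_sum diff_divide_distrib)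
  finally show "(star_sa_egf * (fps_exp 1 + fps_exp (-1))) $ n = (fps_exp (-1) - fps_exp 1) $ n" .
qed

lemma star_sa_egf_deriv: "fps_deriv star_sa_egf = star_sa_egf\<^sup>2 - 1"
proof -
  let ?F = star_sa_egf
  define P where "P = fps_exp 1 + fps_exp (-1 :: real)"
  define Q where "Q = fps_exp 1 - fps_exp (-1 :: real)"
  have FP: "?F * P = - Q"
    using star_sa_egf_mult_exp_sum by (simp add: P_def Q_def)
  then have "fps_deriv (?F * P) = - fps_deriv Q"
    by simp
  moreover have "fps_deriv P = Q" "fps_deriv Q = P"
    by (simp_all add: P_def Q_def flip: fps_const_neg)
  ultimately have dFP: "fps_deriv ?F * P + ?F * Q + P = 0"
    by (simp add: algebra_simps)
  have "(fps_deriv ?F - ?F\<^sup>2 + 1) * P\<^sup>2 = (fps_deriv ?F * P + ?F * Q + P) * P - (?F * P) * (?F * P + Q)"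
    by (simp add: algebra_simps power2_eq_square)
  also have "\<dots> = 0"
    using dFP FP by simp
  finally have "(fps_deriv ?F - ?F\<^sup>2 + 1) * P\<^sup>2 = 0" .
  moreover have "P \<noteq> 0"
    using fps_nonzeroI[of P 0] by (simp add: P_def)
  ultimately have "fps_deriv ?F - ?F\<^sup>2 + 1 = 0"
    by simp
  then show ?thesis
    by (simp add: algebra_simps)
qed

lemma star_sa_quadratic_rec:
  assumes "n \<ge> 1"
  shows "star_sa (n + 1) = (\<Sum>j\<le>n. int (n choose j) * star_sa j * star_sa (n - j))"
proof -
  have "of_nat (n + 1) * (of_int (star_sa (n + 1)) / fact (n + 1)) =
      (\<Sum>j\<le>n. of_int (star_sa j) / fact j * (of_int (star_sa (n - j)) / fact (n - j)) :: real)"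
    using arg_cong[OF star_sa_egf_deriv, of "\<lambda>f. f $ n"] assms
    by (simp add: star_sa_egf_def power2_eq_square fps_mult_nth atLeast0AtMost)
  also have "\<dots> = (\<Sum>j\<le>n. of_int (int (n choose j) * star_sa j * star_sa (n - j)) / fact n)"
    by (rule sum.cong) (auto simp: binomial_fact)
  finally have "of_int (star_sa (n + 1)) / fact n =
      (of_int (\<Sum>j\<le>n. int (n choose j) * star_sa j * star_sa (n - j)) / fact n :: real)"
    by (simp add: sum_divide_distrib del: of_nat_Suc)
  then have "(of_int (star_sa (n + 1)) :: real) =
      of_int (\<Sum>j\<le>n. int (n choose j) * star_sa j * star_sa (n - j))"
    by (simp only: divide_cancel_right fact_nonzero simp_thms)
  then show ?thesis
    by (simp only: of_int_eq_iff)
qed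

(* Since star_sa_egf = -tanh x, these are the Taylor coefficients of tan x. *)
definition tangent_number :: "nat \<Rightarrow> int" where
  "tangent_number n = (-1) ^ ((n + 1) div 2) * star_sa n"

lemma tangent_number_even: "even n \<Longrightarrow> tangent_number n = 0"
  by (simp add: tangent_number_def star_sa_even)

lemma tangent_number_mult:
  assumes "j \<le> n"
  shows "tangent_number j * tangent_number (n - j) = (-1) ^ ((n + 2) div 2) * (star_sa j * star_sa (n - j))"
proof (cases "odd j \<and> odd (n - j)")
  case True
  then obtain a b where "j = 2 * a + 1" "n - j = 2 * b + 1"
    by (meson oddE)
  moreover from this have "(n + 2) div 2 = (a + 1) + (b + 1)"
    using assms by arith
  ultimately show ?thesis
    unfolding tangent_number_def by (simp add: power_add algebra_simps)
next
  case False
  then show ?thesis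
    by (auto simp: tangent_number_def star_sa_even)
qed

lemma tangent_number_rec:
  assumes "n \<ge> 1"
  shows "tangent_number (n + 1) = (\<Sum>j\<le>n. int (n choose j) * tangent_number j * tangent_number (n - j))"
proof -
  have "tangent_number (n + 1) = (-1) ^ ((n + 2) div 2) * star_sa (n + 1)"
    by (simp add: tangent_number_def)
  also have "\<dots> = (\<Sum>j\<le>n. int (n choose j) * ((-1) ^ ((n + 2) div 2) * (star_sa j * star_sa (n - j))))"
    unfolding star_sa_quadratic_rec[OF assms] by (simp add: sum_distrib_left algebra_simps)
  also have "\<dots> = (\<Sum>j\<le>n. int (n choose j) * tangent_number j * tangent_number (n - j))"
    by (intro sum.cong refl) (simp add: mult.assoc tangent_number_mult)
  finally show ?thesis .
qed

lemma tangent_number_1: "tangent_number (Suc 0) = 1"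
proof -
  have "star_sa (Suc 0) = -1"
    by (subst star_sa.simps) (simp add: star_sa_even)
  then show ?thesis
    by (simp add: tangent_number_def)
qed

lemma tangent_number_3: "tangent_number 3 = 2"
  using tangent_number_rec[of 2] tangent_number_1
  by (simp add: numeral_2_eq_2 numeral_3_eq_3 tangent_number_even)

lemma tangent_number_nonneg: "tangent_number n \<ge> 0"
proof (induction n rule: less_induct)
  case (less n)
  consider "n = 0" | "n = 1" | m where "m \<ge> 1" "n = m + 1"
    by (metis One_nat_def add.commute le_add1 not0_implies_Suc plus_1_eq_Suc)
  then show ?case
  proof cases
    case (3 m)
    then show ?thesis
      unfolding \<open>n = m + 1\<close> tangent_number_rec[OF \<open>m \<ge> 1\<close>]
      using less.IH 3 by (auto intro!: sum_nonneg mult_nonneg_nonneg)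
  qed (simp_all add: tangent_number_even tangent_number_1)
qed

lemma abs_star_sa: "\<bar>star_sa n\<bar> = tangent_number n"
proof -
  have "\<bar>star_sa n\<bar> = \<bar>tangent_number n\<bar>"
    by (simp add: tangent_number_def abs_mult)
  then show ?thesis
    using tangent_number_nonneg[of n] by simp
qed

lemma tangent_number_growth: "int ((n + 2) * (n + 1)) * tangent_number n \<le> 3 * tangent_number (n + 2)"
proof (induction n rule: less_induct)
  case (less m)
  let ?T = tangent_number
  consider "even m" | "m = 1" | "odd m" "m \<ge> 3"
    by (cases "even m"; cases "m = 1") (auto elim!: oddE)
  then show ?case
  proof cases
    case 1
    then show ?thesis
      using tangent_number_nonneg[of "m + 2"] by (simp add: tangent_number_even)
  next
    case 2
    then show ?thesis
      using tangent_number_1 tangent_number_3 by (simp add: numeral_3_eq_3)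
  next
    case 3
    (* In the recurrence for T (m + 2), the terms j = 0, 1 give (m + 1) T m; the others, bounded
       termwise by the induction hypothesis at j - 2, recombine to (m + 1) m T m by the
       recurrence for T m. *)
    define f where "f i = int ((m + 1) choose (i + 2)) * ?T (i + 2) * ?T (m - 1 - i)" for i
    have "?T (m + 2) = (\<Sum>j\<le>Suc (Suc (m - 1)). int ((m + 1) choose j) * ?T j * ?T (m + 1 - j))"
      using tangent_number_rec[of "m + 1"] 3 by (simp add: Suc_diff_le)
    also have "\<dots> = int (m + 1) * ?T m + (\<Sum>i\<le>m - 1. f i)"
      using 3 by (simp only: sum.atMost_Suc_shift) (simp add: f_def tangent_number_1 tangent_number_even)
    finally have split: "?T (m + 2) = int (m + 1) * ?T m + (\<Sum>i\<le>m - 1. f i)" .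
    have binom: "int ((m + 1) * m * ((m - 1) choose i)) = int ((m + 1) choose (i + 2)) * int ((i + 2) * (i + 1))" for i
    proof -
      have "((m + 1) choose (i + 2)) * ((i + 2) * (i + 1)) = (m + 1) * m * ((m - 1) choose i)"
        using choose_add_two_mult[of "m + 1" i] by simp
      then show ?thesis
        by (metis of_nat_mult)
    qed
    have "int ((m + 1) * m) * ?T m =
        (\<Sum>i\<le>m - 1. int ((m + 1) * m * ((m - 1) choose i)) * ?T i * ?T (m - 1 - i))"
      using tangent_number_rec[of "m - 1"] 3 by (simp add: sum_distrib_left algebra_simps)
    also have "\<dots> = (\<Sum>i\<le>m - 1. int ((m + 1) choose (i + 2)) * (int ((i + 2) * (i + 1)) * ?T i) * ?T (m - 1 - i))"
    proof (intro sum.cong refl)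
      fix i
      show "int ((m + 1) * m * ((m - 1) choose i)) * ?T i * ?T (m - 1 - i) =
          int ((m + 1) choose (i + 2)) * (int ((i + 2) * (i + 1)) * ?T i) * ?T (m - 1 - i)"
        unfolding binom by (simp only: mult.assoc)
    qed
    also have "\<dots> \<le> (\<Sum>i\<le>m - 1. int ((m + 1) choose (i + 2)) * (3 * ?T (i + 2)) * ?T (m - 1 - i))"
      using less.IH 3 tangent_number_nonneg
      by (intro sum_mono mult_right_mono mult_left_mono) auto
    also have "\<dots> = 3 * (\<Sum>i\<le>m - 1. f i)"
      by (simp add: f_def sum_distrib_left algebra_simps)
    finally have "int ((m + 1) * m) * ?T m \<le> 3 * (\<Sum>i\<le>m - 1. f i)" .
    moreover have "int ((m + 2) * (m + 1)) * ?T m \<le> int ((m + 1) * m) * ?T m + 3 * int (m + 1) * ?T m"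
      using tangent_number_nonneg[of m] by (simp add: algebra_simps mult_right_mono)
    ultimately show ?thesis
      using split by linarith
  qed
qed

lemma tangent_number_pos: "odd n \<Longrightarrow> tangent_number n > 0"
proof (induction n rule: less_induct)
  case (less n)
  show ?case
  proof (cases "n = 1")
    case True
    then show ?thesis
      using tangent_number_1 by simp
  next
    case False
    with less.prems have "n \<ge> 2"
      by (cases n) auto
    define p where "p = n - 2"
    have p: "n = p + 2" "odd p"
      using \<open>n \<ge> 2\<close> less.prems by (simp_all add: p_def)
    moreover have "0 < int ((p + 2) * (p + 1))"
      by (simp only: of_nat_0_less_iff) simp
    ultimately have "0 < int ((p + 2) * (p + 1)) * tangent_number p"
      using less.IH[of p] by simp
    then show ?thesis
      unfolding p(1) using tangent_number_growth[of p] by linarith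
  qed
qed

lemma tangent_number_binomial_less:
  assumes "odd m"
  shows "((m + 3) choose m) * nat (tangent_number m) < ((m + 3) choose (m + 2)) * nat (tangent_number (m + 2))"
proof -
  let ?T = tangent_number and ?C = "(m + 3) choose m"
  have "?C = (m + 3) choose 3"
    using binomial_symmetric[of m "m + 3"] by simp
  moreover have "(1::nat) + 2 = 3" "((1::nat) + 2) * (1 + 1) = 6" "m + 3 - 1 = m + 2" "m + 3 - 2 = m + 1"
    by simp_all
  ultimately have nat_six: "?C * 6 = (m + 3) * ((m + 2) * (m + 1))"
    using choose_add_two_mult[of "m + 3" 1] by (simp only: choose_one mult.assoc)
  have six: "int ?C * 6 = int (m + 3) * int ((m + 2) * (m + 1))"
    using arg_cong[OF nat_six, of int] by (simp only: of_nat_mult of_nat_numeral)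
  have "int ?C * 6 * ?T m = int (m + 3) * int ((m + 2) * (m + 1)) * ?T m"
    by (simp only: six)
  also have "\<dots> \<le> int (m + 3) * (3 * ?T (m + 2))"
    using tangent_number_growth[of m] by (subst mult.assoc) (rule mult_left_mono; simp)
  also have "\<dots> < int (m + 3) * (6 * ?T (m + 2))"
    using tangent_number_pos[of "m + 2"] assms by simp
  finally have "6 * (int ?C * ?T m) < 6 * (int (m + 3) * ?T (m + 2))"
    by (simp only: mult_ac)
  then have "int (?C * nat (?T m)) < int ((m + 3) * nat (?T (m + 2)))"
    using tangent_number_nonneg[of m] tangent_number_nonneg[of "m + 2"] by simp
  moreover have "(m + 3) choose (m + 2) = m + 3"
    using binomial_symmetric[of "m + 2" "m + 3"] by simp
  ultimately show ?thesis
    by (simp only: of_nat_less_iff)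
qed

theorem mainTheorem12:
  fixes k :: nat and c :: 'a and L :: "'a set"
  assumes "k \<ge> 3" and "finite L" and "card L = 2 * k" and "c \<notin> L"
  shows "a_i (k - 1) (star_edges c L) (insert c L) < a_i k (star_edges c L) (insert c L)"
proof -
  define m where "m = 2 * k - 3"
  have m: "odd m" "card L = m + 3" "2 * (k - 1) - 1 = m" "2 * k - 1 = m + 2"
    using assms(1,3) by (auto simp: m_def)
  show ?thesis
    using a_i_star_edges[OF assms(4,2), of "k - 1"] a_i_star_edges[OF assms(4,2), of k]
      tangent_number_binomial_less[OF m(1)] assms(1) m
    by (simp add: abs_star_sa)
qed

end
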